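(* Let $\alpha\in(-\infty,0)\cup(0,1)$, $\gamma\in(0,1]$, let $h:\mathbb{R}\to\mathbb{R}$ be continuous with $m\le h\le 1$ for some $m\in(0,1)$, and let $A$ be a continuous, bounded, nonnegative function on $\mathbb{R}$. Define $h_A(x,y)=\frac1\alpha x^\alpha h(y)+\frac1\alpha A(y)x^{\alpha(1-\gamma)}$ for $(x,y)\in\mathbb{R}_+\times\mathbb{R}$. Then for each $y\in\mathbb{R}$, $x\mapsto h_A(x,y)$ is strictly increasing and strictly concave on $\mathbb{R}_+$, with $\frac{\partial}{\partial x}h_A(0+,y)=\infty$ and $\frac{\partial}{\partial x}h_A(\infty,y)=0$. Moreover there exist constants $\vartheta\in(0,1)$ and $\varrho\in(1,\infty)$ such that $\vartheta\frac{\partial}{\partial x}h_A(x,y)\ge\frac{\partial}{\partial x}h_A(\varrho x,y)$ for all $(x,y)\in\mathbb{R}_+\times\mathbb{R}$. Furthermore, if $\alpha\in(0,1)$ there exist constants $\kappa_1\in(0,\infty)$ and $\rho_1\in(0,1)$ such that $0<h_A(x,y)\le\kappa_1(1+x^{\rho_1})$ for all $(x,y)\in\mathbb{R}_+\times\mathbb{R}$; if $\alpha\in(-\infty,0)$ there exist constants $\kappa_2\in(-\infty,0)$ and $\rho_2\in(-\infty,0)$ such that $0>h_A(x,y)\ge\kappa_2(1+x^{\rho_2})$ for all $(x,y)\in\mathbb{R}_+\times\mathbb{R}$. *)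

theory Defs
  imports "HOL-Analysis.Analysis"
begin

definition strictly_concave_on :: "real set \<Rightarrow> (real \<Rightarrow> real) \<Rightarrow> bool" where
  "strictly_concave_on S f \<longleftrightarrow> convex S \<and>
     (\<forall>x\<in>S. \<forall>y\<in>S. \<forall>t. x \<noteq> y \<longrightarrow> 0 < t \<longrightarrow> t < 1 \<longrightarrow>
        f ((1 - t) * x + t * y) > (1 - t) * f x + t * f y)"

definition hA :: "real \<Rightarrow> real \<Rightarrow> (real \<Rightarrow> real) \<Rightarrow> (real \<Rightarrow> real) \<Rightarrow> real \<Rightarrow> real \<Rightarrow> real" where
  "hA \<alpha> \<gamma> h A x y = (1 / \<alpha>) * x powr \<alpha> * h y + (1 / \<alpha>) * A y * x powr (\<alpha> * (1 - \<gamma>))"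

end

theory Submission
  imports Defs "HOL-Real_Asymp.Real_Asymp"
begin

text \<open>
  With \<open>\<beta> = \<alpha>(1 - \<gamma>)\<close> one has \<open>\<alpha> h\<^sub>A(x, y) = h(y) x\<^bsup>\<alpha>\<^esup> + A(y) x\<^bsup>\<beta>\<^esup>\<close>, and
  \<open>\<partial>\<^sub>x h\<^sub>A = h(y) x\<^bsup>\<alpha>-1\<^esup> + (1 - \<gamma>) A(y) x\<^bsup>\<beta>-1\<^esup>\<close> is a nonnegative combination of two
  negative powers of \<open>x\<close> whose first coefficient is positive. Such a function is positive and
  strictly decreasing, blows up at \<open>0\<close> and vanishes at \<open>\<infinity>\<close>; by the mean value theorem this
  gives monotonicity, strict concavity and the limits of the derivative. Doubling \<open>x\<close> multiplies
  the two powers by \<open>2\<^bsup>\<alpha>-1\<^esup>, 2\<^bsup>\<beta>-1\<^esup> < 1\<close>. Finally \<open>\<beta>\<close> lies between \<open>0\<close> and \<open>\<alpha>\<close>, so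
  \<open>x\<^bsup>\<beta>\<^esup> \<le> 1 + x\<^bsup>\<alpha>\<^esup>\<close>, and with \<open>h \<le> 1\<close>, \<open>A \<le> M\<close> this gives
  \<open>0 < \<alpha> h\<^sub>A \<le> (1 + M)(1 + x\<^bsup>\<alpha>\<^esup>)\<close>.
\<close>

lemma convex_real_atLeastAtMost_subset:
  fixes S :: "real set"
  assumes "convex S" "x \<in> S" "y \<in> S"
  shows "{x..y} \<subseteq> S"
  using assms by (auto intro: mem_is_interval_1_I simp: is_interval_convex_1)

lemma DERIV_pos_imp_strict_mono_on:
  fixes f f' :: "real \<Rightarrow> real"
  assumes "convex S"
    and "\<And>x. x \<in> S \<Longrightarrow> (f has_real_derivative f' x) (at x)"
    and "\<And>x. x \<in> S \<Longrightarrow> 0 < f' x"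
  shows "strict_mono_on S f"
proof (rule strict_mono_onI)
  fix x y assume "x \<in> S" "y \<in> S" "x < y"
  then have "{x..y} \<subseteq> S"
    using \<open>convex S\<close> by (intro convex_real_atLeastAtMost_subset)
  then show "f x < f y"
    using \<open>x < y\<close> assms(2,3) by (metis DERIV_pos_imp_increasing atLeastAtMost_iff subsetD)
qed

lemma DERIV_strict_antimono_imp_chord_below:
  fixes f f' :: "real \<Rightarrow> real"
  assumes "x < y" "0 < t" "t < 1"
    and f': "\<And>z. x \<le> z \<Longrightarrow> z \<le> y \<Longrightarrow> (f has_real_derivative f' z) (at z)"
    and dec: "\<And>u v. x \<le> u \<Longrightarrow> u < v \<Longrightarrow> v \<le> y \<Longrightarrow> f' v < f' u"
  shows "(1 - t) * f x + t * f y < f ((1 - t) * x + t * y)"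
proof -
  define p where "p = (1 - t) * x + t * y"
  have p_dist: "p - x = t * (y - x)" "y - p = (1 - t) * (y - x)"
    unfolding p_def by algebra+
  have "0 < t * (y - x)" "0 < (1 - t) * (y - x)"
    using assms by simp_all
  then have "x < p" "p < y"
    unfolding p_dist[symmetric] by simp_all
  have "\<exists>z. x < z \<and> z < p \<and> f p - f x = (p - x) * f' z"
    using \<open>p < y\<close> by (intro MVT2[OF \<open>x < p\<close>] f') auto
  then obtain z1 where z1: "x < z1" "z1 < p" "f p - f x = (p - x) * f' z1"
    by blast
  have "\<exists>z. p < z \<and> z < y \<and> f y - f p = (y - p) * f' z"
    using \<open>x < p\<close> by (intro MVT2[OF \<open>p < y\<close>] f') auto
  then obtain z2 where z2: "p < z2" "z2 < y" "f y - f p = (y - p) * f' z2"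
    by blast
  have "f' z2 < f' z1"
    using z1 z2 by (auto intro: dec[of z1 z2])
  moreover have "0 < t * (1 - t) * (y - x)"
    using assms by simp
  ultimately have "t * (1 - t) * (y - x) * f' z2 < t * (1 - t) * (y - x) * f' z1"
    by (rule mult_strict_left_mono)
  moreover have "t * (f y - f p) = t * (1 - t) * (y - x) * f' z2"
    using z2(3) p_dist(2) by simp
  moreover have "(1 - t) * (f p - f x) = t * (1 - t) * (y - x) * f' z1"
    using z1(3) p_dist(1) by simp
  ultimately have "t * (f y - f p) < (1 - t) * (f p - f x)"
    by linarith
  then show ?thesis
    unfolding p_def[symmetric] by (simp add: algebra_simps)
qed

lemma DERIV_strict_antimono_imp_strictly_concave_on:
  fixes f f' :: "real \<Rightarrow> real"
  assumes S: "convex S"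
    and f': "\<And>x. x \<in> S \<Longrightarrow> (f has_real_derivative f' x) (at x)"
    and dec: "\<And>x y. x \<in> S \<Longrightarrow> y \<in> S \<Longrightarrow> x < y \<Longrightarrow> f' y < f' x"
  shows "strictly_concave_on S f"
proof -
  have chord: "(1 - t) * f x + t * f y < f ((1 - t) * x + t * y)"
    if "x \<in> S" "y \<in> S" "x < y" "0 < t" "t < 1" for x y t
  proof -
    have "{x..y} \<subseteq> S"
      using S that by (intro convex_real_atLeastAtMost_subset)
    show ?thesis
    proof (rule DERIV_strict_antimono_imp_chord_below[OF \<open>x < y\<close> \<open>0 < t\<close> \<open>t < 1\<close>])
      show "(f has_real_derivative f' z) (at z)" if "x \<le> z" "z \<le> y" for z
        using f' \<open>{x..y} \<subseteq> S\<close> that by auto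
      show "f' v < f' u" if "x \<le> u" "u < v" "v \<le> y" for u v
      proof -
        have "u \<in> S" "v \<in> S"
          using \<open>{x..y} \<subseteq> S\<close> that by auto
        then show ?thesis
          using dec \<open>u < v\<close> by blast
      qed
    qed
  qed
  show ?thesis
    unfolding strictly_concave_on_def
  proof (intro conjI S ballI allI impI)
    fix x y t :: real
    assume "x \<in> S" "y \<in> S" "x \<noteq> y" "0 < t" "t < 1"
    then consider "x < y" | "y < x"
      by linarith
    then show "(1 - t) * f x + t * f y < f ((1 - t) * x + t * y)"
    proof cases
      case 1
      then show ?thesis
        using chord \<open>x \<in> S\<close> \<open>y \<in> S\<close> \<open>0 < t\<close> \<open>t < 1\<close> by blast
    next
      case 2
      then show ?thesis
        using chord[of y x "1 - t"] \<open>x \<in> S\<close> \<open>y \<in> S\<close> \<open>0 < t\<close> \<open>t < 1\<close>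
        by (simp add: algebra_simps)
    qed
  qed
qed

lemma powr_le_add_powr_if_between:
  fixes x :: real
  assumes "0 < x" "min p q \<le> r" "r \<le> max p q"
  shows "x powr r \<le> x powr p + x powr q"
proof (cases "x \<le> 1")
  case True
  then have "x powr r \<le> x powr (min p q)"
    using assms by (intro powr_mono') auto
  then show ?thesis
    by (simp add: min_def add_increasing add_increasing2 split: if_splits)
next
  case False
  then have "x powr r \<le> x powr (max p q)"
    using assms by (intro powr_mono) auto
  then show ?thesis
    by (simp add: max_def add_increasing add_increasing2 split: if_splits)
qed

lemma powr_sum_strict_antimono:
  fixes a b p q x z :: real
  assumes "0 < a" "0 \<le> b" "p < 0" "q \<le> 0" "0 < x" "x < z"
  shows "a * z powr p + b * z powr q < a * x powr p + b * x powr q"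
proof -
  have "a * z powr p < a * x powr p"
    using assms by (simp add: powr_less_mono2_neg)
  moreover have "b * z powr q \<le> b * x powr q"
    using assms by (intro mult_left_mono powr_mono2') auto
  ultimately show ?thesis
    by linarith
qed

lemma filterlim_powr_sum_at_right_0:
  fixes a b p q :: real
  assumes "0 < a" "0 \<le> b" "p < 0"
  shows "filterlim (\<lambda>x. a * x powr p + b * x powr q) at_top (at_right 0)"
proof (rule filterlim_at_top_mono)
  have "filterlim (\<lambda>x::real. x powr p) at_top (at_right 0)"
    using \<open>p < 0\<close> by real_asymp
  then show "filterlim (\<lambda>x. a * x powr p) at_top (at_right 0)"
    using \<open>0 < a\<close> by (intro filterlim_tendsto_pos_mult_at_top[OF tendsto_const])
  show "\<forall>\<^sub>F x in at_right 0. a * x powr p \<le> a * x powr p + b * x powr q"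
    using \<open>0 \<le> b\<close> by (intro always_eventually) simp
qed

lemma tendsto_powr_sum_at_top:
  fixes a b p q :: real
  assumes "p < 0" "q < 0"
  shows "((\<lambda>x. a * x powr p + b * x powr q) \<longlongrightarrow> 0) at_top"
proof -
  have "((\<lambda>x::real. x powr p) \<longlongrightarrow> 0) at_top" "((\<lambda>x::real. x powr q) \<longlongrightarrow> 0) at_top"
    using assms by real_asymp+
  then show ?thesis
    by (intro tendsto_add_zero tendsto_mult_right_zero)
qed

lemma powr_sum_scale_le:
  fixes a b c p q x :: real
  assumes "0 \<le> a" "0 \<le> b" "0 < c" "0 < x"
  shows "a * (c * x) powr p + b * (c * x) powr q
           \<le> max (c powr p) (c powr q) * (a * x powr p + b * x powr q)"
proof -
  have "a * (c * x) powr p + b * (c * x) powr q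
          = c powr p * (a * x powr p) + c powr q * (b * x powr q)"
    using assms by (simp add: powr_mult)
  also have "\<dots> \<le> max (c powr p) (c powr q) * (a * x powr p)
                    + max (c powr p) (c powr q) * (b * x powr q)"
    using assms by (intro add_mono mult_right_mono) auto
  finally show ?thesis
    by (simp add: distrib_left)
qed

locale hA_setting =
  fixes \<alpha> \<gamma> :: real and h A :: "real \<Rightarrow> real"
  assumes alpha_nonzero: "\<alpha> \<noteq> 0" and alpha_less_1: "\<alpha> < 1"
    and gamma_nonneg: "0 \<le> \<gamma>" and gamma_le_1: "\<gamma> \<le> 1"
    and h_pos: "\<And>y. 0 < h y" and A_nonneg: "\<And>y. 0 \<le> A y"
begin

definition \<beta> :: real where
  "\<beta> = \<alpha> * (1 - \<gamma>)"

definition dhA :: "real \<Rightarrow> real \<Rightarrow> real" where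
  "dhA y x = h y * x powr (\<alpha> - 1) + (A y * (1 - \<gamma>)) * x powr (\<beta> - 1)"

lemma beta_between: "min 0 \<alpha> \<le> \<beta>" "\<beta> \<le> max 0 \<alpha>"
proof -
  have "\<beta> = \<alpha> - \<alpha> * \<gamma>" "0 \<le> 1 - \<gamma>"
    unfolding \<beta>_def using gamma_le_1 by (simp_all add: algebra_simps)
  moreover have "0 \<le> \<alpha> \<Longrightarrow> 0 \<le> \<alpha> * \<gamma>" "\<alpha> < 0 \<Longrightarrow> \<alpha> * \<gamma> \<le> 0"
    using gamma_nonneg by (simp_all add: mult_nonpos_nonneg)
  moreover have "0 \<le> \<alpha> \<Longrightarrow> 0 \<le> \<beta>" "\<alpha> < 0 \<Longrightarrow> \<beta> \<le> 0"
    unfolding \<beta>_def using \<open>0 \<le> 1 - \<gamma>\<close> by (simp_all add: mult_nonpos_nonneg)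
  ultimately show "min 0 \<alpha> \<le> \<beta>" "\<beta> \<le> max 0 \<alpha>"
    by (cases "0 \<le> \<alpha>"; simp add: min_def max_def)+
qed

lemma beta_less_1: "\<beta> < 1"
  using beta_between(2) alpha_less_1 by linarith

lemma hA_eq: "hA \<alpha> \<gamma> h A x y = (h y * x powr \<alpha> + A y * x powr \<beta>) / \<alpha>"
  unfolding hA_def \<beta>_def by (simp add: add_divide_distrib)

lemma hA_has_real_derivative:
  assumes "0 < x"
  shows "((\<lambda>t. hA \<alpha> \<gamma> h A t y) has_real_derivative dhA y x) (at x)"
proof -
  have "((\<lambda>t. hA \<alpha> \<gamma> h A t y) has_real_derivative
          1 / \<alpha> * (\<alpha> * x powr (\<alpha> - 1)) * h y + 1 / \<alpha> * A y * (\<beta> * x powr (\<beta> - 1))) (at x)"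
    unfolding hA_def \<beta>_def[symmetric]
    by (rule derivative_eq_intros refl has_real_derivative_powr assms | simp)+
  also have "1 / \<alpha> * (\<alpha> * x powr (\<alpha> - 1)) * h y + 1 / \<alpha> * A y * (\<beta> * x powr (\<beta> - 1))
               = dhA y x"
    unfolding dhA_def \<beta>_def using alpha_nonzero by (simp add: field_simps)
  finally show ?thesis .
qed

lemma deriv_hA: "0 < x \<Longrightarrow> deriv (\<lambda>t. hA \<alpha> \<gamma> h A t y) x = dhA y x"
  by (rule DERIV_imp_deriv[OF hA_has_real_derivative])

lemma hA_differentiable: "0 < x \<Longrightarrow> (\<lambda>t. hA \<alpha> \<gamma> h A t y) differentiable (at x)"
  using hA_has_real_derivative real_differentiable_def by blast

lemma dhA_coefficients: "0 < h y" "0 \<le> A y * (1 - \<gamma>)" "\<alpha> - 1 < 0" "\<beta> - 1 < 0"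
  using h_pos A_nonneg gamma_le_1 alpha_less_1 beta_less_1 by simp_all

lemma dhA_pos: "0 < x \<Longrightarrow> 0 < dhA y x"
  unfolding dhA_def using h_pos A_nonneg gamma_le_1
  by (intro add_pos_nonneg mult_pos_pos mult_nonneg_nonneg) auto

lemma strict_mono_on_hA: "strict_mono_on {0<..} (\<lambda>x. hA \<alpha> \<gamma> h A x y)"
  by (rule DERIV_pos_imp_strict_mono_on[where f' = "dhA y"])
     (auto intro: hA_has_real_derivative dhA_pos)

lemma strictly_concave_on_hA: "strictly_concave_on {0<..} (\<lambda>x. hA \<alpha> \<gamma> h A x y)"
proof (rule DERIV_strict_antimono_imp_strictly_concave_on[where f' = "dhA y"])
  show "dhA y z < dhA y x" if "x \<in> {0<..}" "x < z" for x z
    unfolding dhA_def using dhA_coefficients that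
    by (intro powr_sum_strict_antimono) auto
qed (auto intro: hA_has_real_derivative)

lemma filterlim_deriv_hA_at_right_0:
  "filterlim (\<lambda>x. deriv (\<lambda>t. hA \<alpha> \<gamma> h A t y) x) at_top (at_right 0)"
proof -
  have "filterlim (dhA y) at_top (at_right 0)"
    unfolding dhA_def using dhA_coefficients by (intro filterlim_powr_sum_at_right_0)
  moreover have "\<forall>\<^sub>F x in at_right 0. dhA y x = deriv (\<lambda>t. hA \<alpha> \<gamma> h A t y) x"
    using eventually_at_right_less[of 0] by eventually_elim (simp add: deriv_hA)
  ultimately show ?thesis
    using filterlim_cong by fastforce
qed

lemma tendsto_deriv_hA_at_top:
  "((\<lambda>x. deriv (\<lambda>t. hA \<alpha> \<gamma> h A t y) x) \<longlongrightarrow> 0) at_top"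
proof -
  have "(dhA y \<longlongrightarrow> 0) at_top"
    unfolding dhA_def using dhA_coefficients by (intro tendsto_powr_sum_at_top)
  moreover have "\<forall>\<^sub>F x in at_top. dhA y x = deriv (\<lambda>t. hA \<alpha> \<gamma> h A t y) x"
    using eventually_gt_at_top[of 0] by eventually_elim (simp add: deriv_hA)
  ultimately show ?thesis
    using tendsto_cong by fastforce
qed

lemma deriv_hA_doubling:
  assumes "0 < x"
  shows "deriv (\<lambda>t. hA \<alpha> \<gamma> h A t y) (2 * x)
           \<le> max (2 powr (\<alpha> - 1)) (2 powr (\<beta> - 1)) * deriv (\<lambda>t. hA \<alpha> \<gamma> h A t y) x"
  using powr_sum_scale_le[of "h y" "A y * (1 - \<gamma>)" 2 x "\<alpha> - 1" "\<beta> - 1"]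
    dhA_coefficients assms
  by (simp add: deriv_hA dhA_def less_imp_le)

lemma doubling_factor_bounds:
  "0 < max (2 powr (\<alpha> - 1)) (2 powr (\<beta> - 1))"
  "max (2 powr (\<alpha> - 1)) (2 powr (\<beta> - 1)) < (1::real)"
  using dhA_coefficients by (auto simp: less_max_iff_disj intro: powr_less_one)

lemma deriv_hA_doubling_condition:
  "\<exists>\<theta> \<rho>. 0 < \<theta> \<and> \<theta> < 1 \<and> 1 < \<rho> \<and>
     (\<forall>x>0. \<forall>y. \<theta> * deriv (\<lambda>t. hA \<alpha> \<gamma> h A t y) x \<ge> deriv (\<lambda>t. hA \<alpha> \<gamma> h A t y) (\<rho> * x))"
  using doubling_factor_bounds deriv_hA_doubling
  by (intro exI[of _ "max (2 powr (\<alpha> - 1)) (2 powr (\<beta> - 1))"] exI[of _ 2]) simp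

lemma hA_numerator_pos: "0 < x \<Longrightarrow> 0 < h y * x powr \<alpha> + A y * x powr \<beta>"
  using h_pos[of y] A_nonneg[of y] by (intro add_pos_nonneg) auto

lemma hA_numerator_le:
  assumes "0 < x" "h y \<le> 1" "A y \<le> M"
  shows "h y * x powr \<alpha> + A y * x powr \<beta> \<le> (1 + M) * (1 + x powr \<alpha>)"
proof -
  have "x powr \<beta> \<le> x powr 0 + x powr \<alpha>"
    using beta_between \<open>0 < x\<close> by (intro powr_le_add_powr_if_between) auto
  then have "A y * x powr \<beta> \<le> M * (1 + x powr \<alpha>)"
    using assms A_nonneg[of y] by (intro mult_mono) auto
  moreover have "h y * x powr \<alpha> \<le> 1 * x powr \<alpha>"
    using \<open>h y \<le> 1\<close> by (intro mult_right_mono) auto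
  ultimately show ?thesis
    by (simp add: algebra_simps)
qed

lemma A_upper_bound:
  assumes "bounded (range A)"
  obtains M where "0 \<le> M" "\<And>y. A y \<le> M"
proof -
  obtain M where "\<And>y. A y \<le> M"
    using bounded_imp_bdd_above[OF assms] by (auto simp: bdd_above_def)
  moreover have "0 \<le> M"
    using A_nonneg calculation order_trans by blast
  ultimately show thesis
    using that by blast
qed

lemma hA_growth_alpha_pos:
  assumes "0 < \<alpha>" "bounded (range A)" "\<And>y. h y \<le> 1"
  shows "\<exists>\<kappa>1 \<rho>1. 0 < \<kappa>1 \<and> 0 < \<rho>1 \<and> \<rho>1 < 1 \<and>
           (\<forall>x>0. \<forall>y. 0 < hA \<alpha> \<gamma> h A x y \<and> hA \<alpha> \<gamma> h A x y \<le> \<kappa>1 * (1 + x powr \<rho>1))"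
proof -
  obtain M where M: "0 \<le> M" "\<And>y. A y \<le> M"
    using A_upper_bound assms(2) by blast
  then show ?thesis
    using assms alpha_less_1 hA_numerator_pos hA_numerator_le[OF _ assms(3) M(2)]
    by (intro exI[of _ "(1 + M) / \<alpha>"] exI[of _ \<alpha>]) (simp add: hA_eq divide_right_mono)
qed

lemma hA_growth_alpha_neg:
  assumes "\<alpha> < 0" "bounded (range A)" "\<And>y. h y \<le> 1"
  shows "\<exists>\<kappa>2 \<rho>2. \<kappa>2 < 0 \<and> \<rho>2 < 0 \<and>
           (\<forall>x>0. \<forall>y. 0 > hA \<alpha> \<gamma> h A x y \<and> hA \<alpha> \<gamma> h A x y \<ge> \<kappa>2 * (1 + x powr \<rho>2))"
proof -
  obtain M where M: "0 \<le> M" "\<And>y. A y \<le> M"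
    using A_upper_bound assms(2) by blast
  then show ?thesis
    using assms hA_numerator_pos hA_numerator_le[OF _ assms(3) M(2)]
    by (intro exI[of _ "(1 + M) / \<alpha>"] exI[of _ \<alpha>])
      (simp add: hA_eq divide_pos_neg divide_right_mono_neg)
qed

end

theorem lemma3p1:
  fixes \<alpha> \<gamma> m :: real and h A :: "real \<Rightarrow> real"
  assumes alpha: "\<alpha> < 0 \<or> (0 < \<alpha> \<and> \<alpha> < 1)"
    and gamma: "0 < \<gamma>" "\<gamma> \<le> 1"
    and h_cont: "continuous_on UNIV h"
    and m: "0 < m" "m < 1"
    and h_bounds: "\<And>y. m \<le> h y \<and> h y \<le> 1"
    and A_cont: "continuous_on UNIV A"
    and A_bdd: "bounded (range A)"
    and A_nonneg: "\<And>y. 0 \<le> A y"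
  shows
    "(\<forall>y. strict_mono_on {0<..} (\<lambda>x. hA \<alpha> \<gamma> h A x y)
        \<and> strictly_concave_on {0<..} (\<lambda>x. hA \<alpha> \<gamma> h A x y)
        \<and> (\<forall>x>0. (\<lambda>t. hA \<alpha> \<gamma> h A t y) differentiable (at x))
        \<and> filterlim (\<lambda>x. deriv (\<lambda>t. hA \<alpha> \<gamma> h A t y) x) at_top (at_right 0)
        \<and> ((\<lambda>x. deriv (\<lambda>t. hA \<alpha> \<gamma> h A t y) x) \<longlongrightarrow> 0) at_top)
     \<and> (\<exists>\<theta> \<rho>. 0 < \<theta> \<and> \<theta> < 1 \<and> 1 < \<rho> \<and>
          (\<forall>x>0. \<forall>y. \<theta> * deriv (\<lambda>t. hA \<alpha> \<gamma> h A t y) x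
                       \<ge> deriv (\<lambda>t. hA \<alpha> \<gamma> h A t y) (\<rho> * x)))
     \<and> (0 < \<alpha> \<and> \<alpha> < 1 \<longrightarrow>
          (\<exists>\<kappa>1 \<rho>1. 0 < \<kappa>1 \<and> 0 < \<rho>1 \<and> \<rho>1 < 1 \<and>
             (\<forall>x>0. \<forall>y. 0 < hA \<alpha> \<gamma> h A x y \<and> hA \<alpha> \<gamma> h A x y \<le> \<kappa>1 * (1 + x powr \<rho>1))))
     \<and> (\<alpha> < 0 \<longrightarrow>
          (\<exists>\<kappa>2 \<rho>2. \<kappa>2 < 0 \<and> \<rho>2 < 0 \<and>
             (\<forall>x>0. \<forall>y. 0 > hA \<alpha> \<gamma> h A x y \<and> hA \<alpha> \<gamma> h A x y \<ge> \<kappa>2 * (1 + x powr \<rho>2))))"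
proof -
  interpret hA_setting \<alpha> \<gamma> h A
    using alpha gamma h_bounds m A_nonneg by unfold_locales (auto intro: less_le_trans)
  have h_le_1: "\<And>y. h y \<le> 1"
    using h_bounds by blast
  show ?thesis
    by (intro conjI allI impI strict_mono_on_hA strictly_concave_on_hA hA_differentiable
        filterlim_deriv_hA_at_right_0 tendsto_deriv_hA_at_top deriv_hA_doubling_condition
        hA_growth_alpha_pos[OF _ A_bdd h_le_1] hA_growth_alpha_neg[OF _ A_bdd h_le_1]) auto
qed

end
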